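(* Let $n\ge1$, $\lambda>0$, $\alpha>0$, and $\mu_1,\dots,\mu_n,\mu^*_1,\dots,\mu^*_n\in\mathbb{R}$. Let $X_1,\dots,X_n$ be independent with $X_i\sim\mathrm{Fr\acute{e}}(\mu_i,\lambda,\alpha)$ and $X^*_1,\dots,X^*_n$ be independent with $X^*_i\sim\mathrm{Fr\acute{e}}(\mu^*_i,\lambda,\alpha)$. If $\sum_{i=j}^{n}\mu^*_{(i)}\le\sum_{i=j}^{n}\mu_{(i)}$ for all $j=1,\dots,n$, then $X_{n:n}\ge_{\rm rh}X^*_{n:n}$.
   Context: $X\sim \mathrm{Fr\acute{e}}(\mu,\lambda,\alpha)$ means $X$ has distribution function $\exp\{-((x-\mu)/\lambda)^{-\alpha}\}$ for $x>\mu$. $X_{n:n}=\max(X_1,\dots,X_n)$. For a vector $\boldsymbol{x}$, $x_{(1)}\le\dots\le x_{(n)}$ are its components in increasing order. For random variables $X,Y$ with distribution functions $F,G$ and densities, $X\le_{\rm rh}Y$ means $F'(x)/F(x)\le G'(x)/G(x)$ for all $x$ (reversed hazard rate order). *)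

theory Defs
  imports "HOL-Probability.Probability"
begin

definition frechet_cdf :: "real \<Rightarrow> real \<Rightarrow> real \<Rightarrow> real \<Rightarrow> real" where
  "frechet_cdf mu lam alpha x =
     (if x > mu then exp (- (((x - mu) / lam) powr (- alpha))) else 0)"

definition rh_le :: "(real \<Rightarrow> real) \<Rightarrow> (real \<Rightarrow> real) \<Rightarrow> bool" where
  "rh_le F G \<longleftrightarrow> (\<forall>x. 0 < F x \<and> 0 < G x \<longrightarrow> deriv F x / F x \<le> deriv G x / G x)"

text \<open>i-th smallest (0-based) of the values mu 0, ..., mu (n-1).\<close>
definition ord_stat :: "(nat \<Rightarrow> real) \<Rightarrow> nat \<Rightarrow> nat \<Rightarrow> real" where
  "ord_stat mu n i = sort (map mu [0..<n]) ! i"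

definition sample_max :: "(nat \<Rightarrow> 'a \<Rightarrow> real) \<Rightarrow> nat \<Rightarrow> 'a \<Rightarrow> real" where
  "sample_max X n \<omega> = Max ((\<lambda>i. X i \<omega>) ` {0..<n})"

end

theory Submission
  imports Defs
begin

text \<open>The distribution function of the maximum of independent variables is the product of
  their distribution functions, so the reversed hazard rate of \<open>X\<^sub>n\<^sub>:\<^sub>n\<close> at \<open>x\<close> is
  \<open>\<Sum>\<^sub>i r(\<mu>\<^sub>i)\<close> with \<open>r(\<mu>) = \<alpha>/\<lambda> ((x - \<mu>)/\<lambda>)\<^sup>-\<^sup>\<alpha>\<^sup>-\<^sup>1\<close>. As a function of the
  location \<open>\<mu> < x\<close>, \<open>r\<close> is increasing and convex, and the hypothesis says that \<open>\<mu>\<^sup>*\<close> is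
  weakly submajorized by \<open>\<mu>\<close>. The Tomi\'c--Weyl inequality, obtained from the tangent line
  bound \<open>r(a) - r(b) \<ge> r'(b) (a - b)\<close> at the sorted values and Abel summation, then gives
  \<open>\<Sum>\<^sub>i r(\<mu>\<^sup>*\<^sub>i) \<le> \<Sum>\<^sub>i r(\<mu>\<^sub>i)\<close>.\<close>

text \<open>Reversed hazard rate of \<open>Fr\'e(\<mu>, \<lambda>, \<alpha>)\<close> at \<open>x\<close>; meaningful only for \<open>\<mu> < x\<close>.\<close>
definition frechet_rhr :: "real \<Rightarrow> real \<Rightarrow> real \<Rightarrow> real \<Rightarrow> real" where
  "frechet_rhr mu lam alpha x = alpha / lam * ((x - mu) / lam) powr (- alpha - 1)"

lemma frechet_cdf_pos_iff: "0 < frechet_cdf mu lam alpha x \<longleftrightarrow> mu < x"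
  by (simp add: frechet_cdf_def)

lemma prod_frechet_cdf_pos_iff:
  assumes "finite I"
  shows "0 < (\<Prod>i\<in>I. frechet_cdf (m i) lam alpha x) \<longleftrightarrow> (\<forall>i\<in>I. m i < x)"
proof
  assume pos: "0 < (\<Prod>i\<in>I. frechet_cdf (m i) lam alpha x)"
  show "\<forall>i\<in>I. m i < x"
  proof (rule ccontr)
    assume "\<not> (\<forall>i\<in>I. m i < x)"
    then obtain i where "i \<in> I" "frechet_cdf (m i) lam alpha x = 0"
      by (auto simp: frechet_cdf_def)
    with pos prod_zero[OF assms] show False by fastforce
  qed
qed (simp add: prod_pos frechet_cdf_pos_iff)

lemma frechet_cdf_has_real_derivative:
  assumes "lam > 0" "mu < x"
  shows "(frechet_cdf mu lam alpha has_real_derivative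
           frechet_cdf mu lam alpha x * frechet_rhr mu lam alpha x) (at x)"
proof -
  have "((\<lambda>y. exp (- (((y - mu) / lam) powr (- alpha)))) has_real_derivative
           frechet_cdf mu lam alpha x * frechet_rhr mu lam alpha x) (at x)"
    using assms by (auto intro!: derivative_eq_intros simp: frechet_cdf_def frechet_rhr_def)
  then show ?thesis
    by (rule has_field_derivative_transform_within_open[where S = "{mu<..}"])
       (use assms in \<open>auto simp: frechet_cdf_def\<close>)
qed

lemma rhr_prod_frechet_cdf:
  assumes "finite I" "lam > 0" "\<And>i. i \<in> I \<Longrightarrow> m i < x"
  shows "deriv (\<lambda>y. \<Prod>i\<in>I. frechet_cdf (m i) lam alpha y) x
           / (\<Prod>i\<in>I. frechet_cdf (m i) lam alpha x)
         = (\<Sum>i\<in>I. frechet_rhr (m i) lam alpha x)"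
proof -
  have nz: "frechet_cdf (m i) lam alpha x \<noteq> 0" if "i \<in> I" for i
    using assms(3)[OF that] by (simp add: frechet_cdf_def)
  have "((\<lambda>y. \<Prod>i\<in>I. frechet_cdf (m i) lam alpha y) has_real_derivative
          (\<Prod>i\<in>I. frechet_cdf (m i) lam alpha x)
          * (\<Sum>i\<in>I. frechet_cdf (m i) lam alpha x * frechet_rhr (m i) lam alpha x
                      / frechet_cdf (m i) lam alpha x)) (at x)"
    by (rule has_field_derivative_prod'[of I "\<lambda>i. frechet_cdf (m i) lam alpha"])
       (use nz assms in \<open>auto intro: frechet_cdf_has_real_derivative\<close>)
  then show ?thesis
    using nz assms(1) by (simp add: DERIV_imp_deriv)
qed

lemma frechet_rhr_has_real_derivative_location:
  assumes "lam > 0" "mu < x"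
  shows "((\<lambda>m. frechet_rhr m lam alpha x) has_real_derivative
           alpha * (alpha + 1) / lam\<^sup>2 * ((x - mu) / lam) powr (- alpha - 2)) (at mu)"
proof -
  have exponent: "- 2 - alpha = - alpha - (2::real)" by simp
  show ?thesis
    using assms
    by (auto intro!: derivative_eq_intros simp: frechet_rhr_def)
       (simp add: power2_eq_square field_simps exponent)
qed

lemma sum_mult_nonneg_if_tail_sums_nonneg:
  fixes d D :: "nat \<Rightarrow> 'a :: linordered_idom"
  assumes mono: "\<And>i. Suc i < n \<Longrightarrow> d i \<le> d (Suc i)"
    and nonneg: "\<And>i. i < n \<Longrightarrow> 0 \<le> d i"
    and tails: "\<And>j. j < n \<Longrightarrow> 0 \<le> (\<Sum>i=j..<n. D i)"
  shows "0 \<le> (\<Sum>i=0..<n. d i * D i)"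
proof (cases n)
  case (Suc l)
  have abel: "d j * (\<Sum>i=j..<n. D i) \<le> (\<Sum>i=j..<n. d i * D i)" if "j \<le> l" for j
    using that
  proof (induction j rule: inc_induct)
    case base
    then show ?case using Suc by simp
  next
    case (step k)
    then have "k < n" "Suc k < n" using Suc by auto
    have "d k * (\<Sum>i=Suc k..<n. D i) \<le> d (Suc k) * (\<Sum>i=Suc k..<n. D i)"
      by (rule mult_right_mono[OF mono tails]) fact+
    also have "\<dots> \<le> (\<Sum>i=Suc k..<n. d i * D i)"
      by (fact step.IH)
    finally show ?case
      using \<open>k < n\<close> by (simp add: sum.atLeast_Suc_lessThan distrib_left)
  qed
  have "0 \<le> d 0 * (\<Sum>i=0..<n. D i)" using nonneg tails Suc by simp
  also have "\<dots> \<le> (\<Sum>i=0..<n. d i * D i)" using abel by simp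
  finally show ?thesis .
qed simp

lemma ord_stat_in_image: "i < n \<Longrightarrow> ord_stat m n i \<in> m ` {0..<n}"
  unfolding ord_stat_def by (metis diff_zero length_map length_sort length_upt nth_mem
      set_map set_sort set_upt)

lemma ord_stat_mono: "i \<le> j \<Longrightarrow> j < n \<Longrightarrow> ord_stat m n i \<le> ord_stat m n j"
  unfolding ord_stat_def by (rule sorted_nth_mono) auto

lemma sum_ord_stat: "(\<Sum>i=0..<n. f (ord_stat m n i)) = (\<Sum>i=0..<n. f (m i))"
proof -
  have "(\<Sum>i=0..<n. f (ord_stat m n i)) = sum_list (map f (sort (map m [0..<n])))"
    by (simp add: ord_stat_def sum_list_sum_nth atLeast0LessThan)
  also have "\<dots> = sum_list (map f (map m [0..<n]))"
    by (metis mset_map mset_sort sum_mset_sum_list)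
  also have "\<dots> = (\<Sum>i=0..<n. f (m i))"
    by (simp add: sum_list_sum_nth atLeast0LessThan)
  finally show ?thesis .
qed

lemma sum_le_sum_weak_submajorization:
  fixes f f' :: "real \<Rightarrow> real" and a b :: "nat \<Rightarrow> real"
  assumes "open S" "connected S"
    and deriv: "\<And>m. m \<in> S \<Longrightarrow> (f has_real_derivative f' m) (at m)"
    and f'_mono: "\<And>m m'. m \<in> S \<Longrightarrow> m' \<in> S \<Longrightarrow> m \<le> m' \<Longrightarrow> f' m \<le> f' m'"
    and f'_nonneg: "\<And>m. m \<in> S \<Longrightarrow> 0 \<le> f' m"
    and a: "\<And>i. i < n \<Longrightarrow> a i \<in> S" and b: "\<And>i. i < n \<Longrightarrow> b i \<in> S"
    and tails: "\<And>j. j < n \<Longrightarrow> (\<Sum>i=j..<n. ord_stat b n i) \<le> (\<Sum>i=j..<n. ord_stat a n i)"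
  shows "(\<Sum>i=0..<n. f (b i)) \<le> (\<Sum>i=0..<n. f (a i))"
proof -
  have "convex_on S f"
    by (rule convex_on_realI[OF \<open>connected S\<close> deriv f'_mono])
  then have tangent: "f' v * (u - v) \<le> f u - f v" if "u \<in> S" "v \<in> S" for u v
    using convex_on_imp_above_tangent[OF _ \<open>connected S\<close>] that deriv \<open>open S\<close>
    by (simp add: interior_open has_field_derivative_at_within)
  define A B where "A = ord_stat a n" and "B = ord_stat b n"
  have A: "A i \<in> S" and B: "B i \<in> S" if "i < n" for i
    using ord_stat_in_image[OF that, of a] ord_stat_in_image[OF that, of b] a b
    by (auto simp: A_def B_def)
  have "0 \<le> (\<Sum>i=0..<n. f' (B i) * (A i - B i))"
  proof (rule sum_mult_nonneg_if_tail_sums_nonneg)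
    show "f' (B i) \<le> f' (B (Suc i))" if "Suc i < n" for i
      using that B by (intro f'_mono) (auto simp: B_def intro: ord_stat_mono)
    show "0 \<le> (\<Sum>i=j..<n. A i - B i)" if "j < n" for j
      using tails[OF that] by (simp add: A_def B_def sum_subtractf)
  qed (use B f'_nonneg in auto)
  also have "\<dots> \<le> (\<Sum>i=0..<n. f (A i) - f (B i))"
    by (rule sum_mono) (use A B tangent in auto)
  also have "\<dots> = (\<Sum>i=0..<n. f (a i)) - (\<Sum>i=0..<n. f (b i))"
    by (simp add: sum_subtractf A_def B_def sum_ord_stat)
  finally show ?thesis by simp
qed

lemma sum_frechet_rhr_le:
  assumes "lam > 0" "alpha > 0"
    and "\<And>i. i < n \<Longrightarrow> mu i < x" "\<And>i. i < n \<Longrightarrow> mus i < x"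
    and "\<And>j. j < n \<Longrightarrow> (\<Sum>i=j..<n. ord_stat mus n i) \<le> (\<Sum>i=j..<n. ord_stat mu n i)"
  shows "(\<Sum>i=0..<n. frechet_rhr (mus i) lam alpha x) \<le> (\<Sum>i=0..<n. frechet_rhr (mu i) lam alpha x)"
proof (rule sum_le_sum_weak_submajorization[where S = "{..<x}" and f = "\<lambda>m. frechet_rhr m lam alpha x"])
  show "((\<lambda>m. frechet_rhr m lam alpha x) has_real_derivative
          alpha * (alpha + 1) / lam\<^sup>2 * ((x - m) / lam) powr (- alpha - 2)) (at m)"
    if "m \<in> {..<x}" for m
    using that assms by (intro frechet_rhr_has_real_derivative_location) auto
  show "alpha * (alpha + 1) / lam\<^sup>2 * ((x - m) / lam) powr (- alpha - 2)
          \<le> alpha * (alpha + 1) / lam\<^sup>2 * ((x - m') / lam) powr (- alpha - 2)"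
    if "m \<in> {..<x}" "m' \<in> {..<x}" "m \<le> m'" for m m'
    using that assms by (intro mult_left_mono powr_mono2') (auto simp: divide_right_mono)
qed (use assms in auto)

lemma cdf_sample_max_indep:
  fixes M :: "'a measure" and Y :: "nat \<Rightarrow> 'a \<Rightarrow> real"
  assumes "prob_space M" "n \<ge> 1"
    and meas: "\<And>i. i < n \<Longrightarrow> Y i \<in> borel_measurable M"
    and indep: "prob_space.indep_vars M (\<lambda>_. borel) Y {0..<n}"
  shows "cdf (distr M borel (sample_max Y n)) x = (\<Prod>i\<in>{0..<n}. cdf (distr M borel (Y i)) x)"
proof -
  interpret prob_space M by fact
  have max_meas: "sample_max Y n \<in> borel_measurable M"
    unfolding sample_max_def by (rule borel_measurable_Max) (auto simp: meas)
  have "{0..<n} \<noteq> {}" using \<open>n \<ge> 1\<close> by auto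
  then have events: "sample_max Y n -` {..x} \<inter> space M = (\<Inter>i\<in>{0..<n}. Y i -` {..x} \<inter> space M)"
    by (auto simp: sample_max_def)
  have "cdf (distr M borel (sample_max Y n)) x = prob (\<Inter>i\<in>{0..<n}. Y i -` {..x} \<inter> space M)"
    by (simp add: cdf_def2 measure_distr[OF max_meas] events)
  also have "\<dots> = (\<Prod>i\<in>{0..<n}. prob (Y i -` {..x} \<inter> space M))"
    using indep \<open>{0..<n} \<noteq> {}\<close> by (intro indep_varsD) auto
  also have "\<dots> = (\<Prod>i\<in>{0..<n}. cdf (distr M borel (Y i)) x)"
    by (intro prod.cong) (simp_all add: cdf_def2 measure_distr meas)
  finally show ?thesis .
qed

theorem mainTheorem2:
  fixes M :: "'a measure" and X Xs :: "nat \<Rightarrow> 'a \<Rightarrow> real"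
    and mu mus :: "nat \<Rightarrow> real" and lam alpha :: real and n :: nat
  assumes "prob_space M"
    and "n \<ge> 1" and "lam > 0" and "alpha > 0"
    and "\<And>i. i < n \<Longrightarrow> X i \<in> borel_measurable M"
    and "\<And>i. i < n \<Longrightarrow> Xs i \<in> borel_measurable M"
    and "prob_space.indep_vars M (\<lambda>_. borel) X {0..<n}"
    and "prob_space.indep_vars M (\<lambda>_. borel) Xs {0..<n}"
    and "\<And>i. i < n \<Longrightarrow> cdf (distr M borel (X i)) = frechet_cdf (mu i) lam alpha"
    and "\<And>i. i < n \<Longrightarrow> cdf (distr M borel (Xs i)) = frechet_cdf (mus i) lam alpha"
    and "\<And>j. j < n \<Longrightarrow> (\<Sum>i=j..<n. ord_stat mus n i) \<le> (\<Sum>i=j..<n. ord_stat mu n i)"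
  shows "rh_le (cdf (distr M borel (sample_max Xs n))) (cdf (distr M borel (sample_max X n)))"
proof -
  have FX: "cdf (distr M borel (sample_max X n)) = (\<lambda>x. \<Prod>i\<in>{0..<n}. frechet_cdf (mu i) lam alpha x)"
    using cdf_sample_max_indep[OF assms(1,2,5,7)] assms(9) by auto
  have FXs: "cdf (distr M borel (sample_max Xs n)) = (\<lambda>x. \<Prod>i\<in>{0..<n}. frechet_cdf (mus i) lam alpha x)"
    using cdf_sample_max_indep[OF assms(1,2,6,8)] assms(10) by auto
  show ?thesis
    unfolding rh_le_def FX FXs
  proof (intro allI impI, elim conjE)
    fix x
    assume "0 < (\<Prod>i\<in>{0..<n}. frechet_cdf (mus i) lam alpha x)"
      and "0 < (\<Prod>i\<in>{0..<n}. frechet_cdf (mu i) lam alpha x)"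
    then have mus_lt: "\<And>i. i \<in> {0..<n} \<Longrightarrow> mus i < x"
      and mu_lt: "\<And>i. i \<in> {0..<n} \<Longrightarrow> mu i < x"
      by (simp_all add: prod_frechet_cdf_pos_iff)
    have "(\<Sum>i=0..<n. frechet_rhr (mus i) lam alpha x) \<le> (\<Sum>i=0..<n. frechet_rhr (mu i) lam alpha x)"
      using mus_lt mu_lt by (intro sum_frechet_rhr_le assms(3,4,11)) auto
    then show "deriv (\<lambda>y. \<Prod>i\<in>{0..<n}. frechet_cdf (mus i) lam alpha y) x
                       / (\<Prod>i\<in>{0..<n}. frechet_cdf (mus i) lam alpha x)
                     \<le> deriv (\<lambda>y. \<Prod>i\<in>{0..<n}. frechet_cdf (mu i) lam alpha y) x
                       / (\<Prod>i\<in>{0..<n}. frechet_cdf (mu i) lam alpha x)"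
      using rhr_prod_frechet_cdf[where I = "{0..<n}" and m = mus, OF _ assms(3) mus_lt]
        rhr_prod_frechet_cdf[where I = "{0..<n}" and m = mu, OF _ assms(3) mu_lt] by simp
  qed
qed

end
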